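(* Let $(F_\epsilon)_{\epsilon>0}$ be a perturbation of a cellular automaton. Then: (i) if $\mathcal{M}_\epsilon$ is a singleton for all $\epsilon>0$, then $\lim_{\epsilon\to0}\mathrm{diam}(\mathcal{M}_\epsilon)=0$; (ii) if $\mathcal{M}_{\lim}$ is a singleton, then $\lim_{\epsilon\to0}\mathrm{diam}(\mathcal{M}_\epsilon)=0$; (iii) if $\lim_{\epsilon\to0}\mathrm{diam}(\mathcal{M}_\epsilon)=0$, then $\mathcal{M}_{\lim}$ is uniformly approached; (iv) if $\mathcal{M}_{\lim}$ is uniformly approached, then $\liminf_{\epsilon\to0}\mathrm{diam}(\mathcal{M}_\epsilon)=0$.
   Context: $\mathcal{A}$ finite; $\mathcal{M}(\mathcal{A}^{\mathbb{Z}})$ is the set of shift-invariant Borel probability measures with the weak topology, metrized by $d_{\mathcal{M}}(\mu,\nu)=\sum_{n\ge0}2^{-n}\frac12\sum_{u\in\mathcal{A}^{[-n,n]}}|\mu([u])-\nu([u])|$; $\mathrm{diam}(\mathcal{K})=\max\{d_{\mathcal{M}}(\mu,\nu):\mu,\nu\in\mathcal{K}\}$ for compact $\mathcal{K}$. A perturbation of a CA $F$ (neighborhood $\mathcal{N}$, local rule $f$) is a family $(F_\epsilon)_{\epsilon>0}$ of probabilistic cellular automata with neighborhood $\mathcal{N}$ whose local stochastic matrices $f_\epsilon$ satisfy $f_\epsilon(u,f(u))\ge1-\epsilon$; they act on measures via $F_\epsilon(x,[w]_U)=\prod_{i\in U}f_\epsilon(x_{i+\mathcal{N}},w_i)$.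 $\mathcal{M}_\epsilon$ is the set of $\mu\in\mathcal{M}(\mathcal{A}^{\mathbb{Z}})$ with $F_\epsilon\mu=\mu$; $\mathcal{M}_{\lim}$ is the set of limits of sequences $\mu_n\in\mathcal{M}_{\epsilon_n}$ with $\epsilon_n\to0$, $\epsilon_n>0$. $\mathcal{M}_{\lim}$ is uniformly approached if for every family $\pi_\epsilon\in\mathcal{M}_\epsilon$ the set of accumulation points of $\pi_\epsilon$ as $\epsilon\to0$ equals $\mathcal{M}_{\lim}$. *)

theory Defs
  imports "HOL-Probability.Probability"
begin

text \<open>Configurations of the full shift: functions int => 'a, 'a a finite alphabet.
  Borel sigma-algebra of the product (discrete) topology = product sigma algebra.\<close>

definition shift_space :: "(int \<Rightarrow> 'a) measure" where
  "shift_space = PiM UNIV (\<lambda>_. count_space UNIV)"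

definition shift_map :: "(int \<Rightarrow> 'a) \<Rightarrow> (int \<Rightarrow> 'a)" where
  "shift_map x = (\<lambda>i. x (i + 1))"

definition SIM :: "(int \<Rightarrow> 'a::finite) measure set" where
  "SIM = {\<mu>. prob_space \<mu> \<and> sets \<mu> = sets shift_space
              \<and> distr \<mu> shift_space shift_map = \<mu>}"

definition cyl :: "int set \<Rightarrow> (int \<Rightarrow> 'a) \<Rightarrow> (int \<Rightarrow> 'a) set" where
  "cyl U w = {x. \<forall>i\<in>U. x i = w i}"

definition dM :: "(int \<Rightarrow> 'a::finite) measure \<Rightarrow> (int \<Rightarrow> 'a) measure \<Rightarrow> real" where
  "dM \<mu> \<nu> = (\<Sum>n. (1/2) ^ n * (1/2) *
      (\<Sum>u\<in>PiE {-int n..int n} (\<lambda>_. UNIV).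
          \<bar>measure \<mu> (cyl {-int n..int n} u) - measure \<nu> (cyl {-int n..int n} u)\<bar>))"

definition diamM :: "(int \<Rightarrow> 'a::finite) measure set \<Rightarrow> real" where
  "diamM K = Sup {dM \<mu> \<nu> | \<mu> \<nu>. \<mu> \<in> K \<and> \<nu> \<in> K}"

definition pat :: "(int \<Rightarrow> 'a) \<Rightarrow> int \<Rightarrow> int set \<Rightarrow> (int \<Rightarrow> 'a)" where
  "pat x i N = restrict (\<lambda>j. x (i + j)) N"

definition perturbation ::
  "int set \<Rightarrow> ((int \<Rightarrow> 'a::finite) \<Rightarrow> 'a) \<Rightarrow> (real \<Rightarrow> (int \<Rightarrow> 'a) \<Rightarrow> 'a \<Rightarrow> real) \<Rightarrow> bool" where
  "perturbation N f feps \<longleftrightarrow> finite N \<and>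
     (\<forall>eps>0. \<forall>u\<in>extensional N.
        (\<forall>b. feps eps u b \<ge> 0) \<and> (\<Sum>b\<in>UNIV. feps eps u b) = 1
        \<and> feps eps u (f u) \<ge> 1 - eps)"

text \<open>M_eps: shift-invariant measures with F_eps mu = mu, i.e.
  mu([w]_U) = integral of prod_{i in U} f_eps(x_{i+N}, w_i) for all finite U, w.\<close>
definition Meps ::
  "int set \<Rightarrow> (real \<Rightarrow> (int \<Rightarrow> 'a::finite) \<Rightarrow> 'a \<Rightarrow> real) \<Rightarrow> real \<Rightarrow> (int \<Rightarrow> 'a) measure set" where
  "Meps N feps eps = {\<mu>\<in>SIM. \<forall>U w. finite U \<longrightarrow>
      measure \<mu> (cyl U w) = (\<integral>x. (\<Prod>i\<in>U. feps eps (pat x i N) (w i)) \<partial>\<mu>)}"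

definition Mlim ::
  "int set \<Rightarrow> (real \<Rightarrow> (int \<Rightarrow> 'a::finite) \<Rightarrow> 'a \<Rightarrow> real) \<Rightarrow> (int \<Rightarrow> 'a) measure set" where
  "Mlim N feps = {\<mu>\<in>SIM. \<exists>e m. (\<forall>n. e n > 0) \<and> e \<longlonglongrightarrow> 0 \<and>
      (\<forall>n. m n \<in> Meps N feps (e n)) \<and> (\<lambda>n. dM (m n) \<mu>) \<longlonglongrightarrow> 0}"

definition acc_pts :: "(real \<Rightarrow> (int \<Rightarrow> 'a::finite) measure) \<Rightarrow> (int \<Rightarrow> 'a) measure set" where
  "acc_pts \<pi> = {\<mu>\<in>SIM. \<exists>e. (\<forall>n. e n > 0) \<and> e \<longlonglongrightarrow> 0 \<and> (\<lambda>n. dM (\<pi> (e n)) \<mu>) \<longlonglongrightarrow> 0}"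

definition uniformly_approached ::
  "int set \<Rightarrow> (real \<Rightarrow> (int \<Rightarrow> 'a::finite) \<Rightarrow> 'a \<Rightarrow> real) \<Rightarrow> bool" where
  "uniformly_approached N feps \<longleftrightarrow>
     (\<forall>\<pi>. (\<forall>eps>0. \<pi> eps \<in> Meps N feps eps) \<longrightarrow> acc_pts \<pi> = Mlim N feps)"

end

theory Submission
  imports Defs "HOL-Library.Diagonal_Subsequence"
begin

text \<open>Everything else rests on two facts about the set of
  shift-invariant measures with the metric \<open>d\<^sub>\<M>\<close>, which metrizes convergence of all
  cylinder probabilities: it is sequentially compact (a diagonal argument on the countably many
  cylinder probabilities, followed by Kolmogorov extension), and every \<open>\<M>\<^sub>\<epsilon>\<close> is
  nonempty (Krylov--Bogolyubov).
  For (ii), compactness shows that a unique point \<open>\<mu>\<^sub>0\<close> of \<open>\<M>\<^sub>l\<^sub>i\<^sub>m\<close> attracts the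
  sets \<open>\<M>\<^sub>\<epsilon>\<close> uniformly, so their diameters vanish. For (iii), a point of
  \<open>\<M>\<^sub>l\<^sub>i\<^sub>m\<close> is a limit of some \<open>\<mu>\<^sub>n \<in> \<M>\<^bsub>\<epsilon>\<^sub>n\<^esub>\<close>, and any other selection
  \<open>\<pi>(\<epsilon>\<^sub>n)\<close> is within \<open>diam \<M>\<^bsub>\<epsilon>\<^sub>n\<^esub>\<close> of \<open>\<mu>\<^sub>n\<close>. For (iv), if the diameters stayed
  above \<open>\<delta>\<close> near \<open>0\<close>, one could select \<open>\<pi>(\<epsilon>)\<close> at distance \<open>\<delta>/2\<close> from a fixed point of
  \<open>\<M>\<^sub>l\<^sub>i\<^sub>m\<close>, which then is no accumulation point of \<open>\<pi>\<close>.\<close>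

section \<open>Cylinders and shift-invariant measures\<close>

abbreviation words :: "int set \<Rightarrow> (int \<Rightarrow> 'a) set" where
  "words U \<equiv> PiE U (\<lambda>_. UNIV)"

definition shift_prob :: "(int \<Rightarrow> 'a::finite) measure \<Rightarrow> bool" where
  "shift_prob M \<longleftrightarrow> prob_space M \<and> sets M = sets shift_space"

lemma space_shift_space [simp]: "space shift_space = UNIV"
  by (simp add: shift_space_def space_PiM)

lemma measurable_coordinate [measurable]: "(\<lambda>x. x i) \<in> shift_space \<rightarrow>\<^sub>M count_space UNIV"
  unfolding shift_space_def by measurable

lemma sets_cyl [measurable]:
  assumes "finite J"
  shows "cyl J w \<in> sets shift_space"
proof -
  have "cyl J w = {x \<in> space shift_space. \<forall>i\<in>J. x i = w i}"
    by (auto simp: cyl_def)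
  also have "\<dots> \<in> sets shift_space"
    using assms by measurable
  finally show ?thesis .
qed

lemma cyl_empty [simp]: "cyl {} w = UNIV"
  by (simp add: cyl_def)

lemma cyl_restrict [simp]: "cyl J (restrict w J) = cyl J w"
  by (auto simp: cyl_def)

lemma mem_cyl_words_iff_restrict: "x \<in> cyl H v \<and> v \<in> words H \<longleftrightarrow> v = restrict x H"
  by (auto simp: cyl_def PiE_def extensional_def restrict_def)

lemma shift_probD:
  assumes "shift_prob M"
  shows "prob_space M" "sets M = sets shift_space" "space M = UNIV"
  using assms sets_eq_imp_space_eq[of M shift_space] by (auto simp: shift_prob_def)

lemma shift_prob_sets_cyl [measurable]: "shift_prob M \<Longrightarrow> finite J \<Longrightarrow> cyl J w \<in> sets M"
  by (simp add: shift_probD(2))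

lemma shift_prob_measure_le_1: "shift_prob M \<Longrightarrow> measure M A \<le> 1"
  by (simp add: shift_probD(1) prob_space.prob_le_1)

lemma shift_prob_measure_UNIV: "shift_prob M \<Longrightarrow> measure M UNIV = 1"
  using shift_probD[of M] prob_space.prob_space[of M] by simp

lemma cylinder_function_eq_sum:
  fixes g :: "(int \<Rightarrow> 'a::finite) \<Rightarrow> real"
  assumes H: "finite H" and g: "\<And>x y. restrict x H = restrict y H \<Longrightarrow> g x = g y"
  shows "g x = (\<Sum>v\<in>words H. g v * indicator (cyl H v) x)"
proof -
  have "(\<Sum>v\<in>words H. g v * indicator (cyl H v) x) = (\<Sum>v\<in>{restrict x H}. g v * indicator (cyl H v) x)"
    using H mem_cyl_words_iff_restrict[of x H]
    by (intro sum.mono_neutral_right) (auto simp: finite_PiE indicator_def)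
  also have "\<dots> = g x"
    using g[of "restrict x H" x] by (simp add: indicator_def cyl_def)
  finally show ?thesis ..
qed

lemma
  assumes M: "shift_prob M" and H: "finite H"
    and g: "\<And>x y. restrict x H = restrict y H \<Longrightarrow> g x = g y"
  shows integrable_cylinder_function: "integrable M g"
    and integral_cylinder_function:
      "integral\<^sup>L M g = (\<Sum>v\<in>words H. g v * measure M (cyl H v))"
proof -
  interpret prob_space M using shift_probD(1)[OF M] .
  have g_eq: "g = (\<lambda>x. \<Sum>v\<in>words H. g v * indicator (cyl H v) x)"
    using cylinder_function_eq_sum[where g=g, OF H g] by blast
  show "integrable M g"
    by (subst g_eq) (auto intro!: Bochner_Integration.integrable_sum integrable_real_indicator simp: M H less_top[symmetric])
  show "integral\<^sup>L M g = (\<Sum>v\<in>words H. g v * measure M (cyl H v))"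
    by (subst g_eq, subst Bochner_Integration.integral_sum) (auto simp: M H less_top[symmetric])
qed

lemma measure_cyl_eq_sum:
  assumes M: "shift_prob M" and H: "finite H" and JH: "J \<subseteq> H"
  shows "measure M (cyl J w) = (\<Sum>v\<in>words H \<inter> cyl J w. measure M (cyl H v))"
proof -
  have J: "finite J"
    using H JH finite_subset by blast
  have ind: "indicator (cyl J w) x = (indicator (cyl J w) y :: real)"
    if "restrict x H = restrict y H" for x y
    using that JH by (auto simp: indicator_def cyl_def restrict_def fun_eq_iff) (metis subsetD)+
  have "measure M (cyl J w) = integral\<^sup>L M (indicator (cyl J w))"
    using J M by simp
  also have "\<dots> = (\<Sum>v\<in>words H. indicator (cyl J w) v * measure M (cyl H v))"
    by (rule integral_cylinder_function[OF M H ind])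
  also have "\<dots> = (\<Sum>v\<in>words H. if v \<in> cyl J w then measure M (cyl H v) else 0)"
    by (intro sum.cong) (simp_all add: indicator_def)
  also have "\<dots> = (\<Sum>v\<in>words H \<inter> cyl J w. measure M (cyl H v))"
    using H by (intro sum.inter_restrict[symmetric]) (simp add: finite_PiE)
  finally show ?thesis .
qed

lemma sum_measure_cyl_words:
  assumes "shift_prob M" "finite H"
  shows "(\<Sum>v\<in>words H. measure M (cyl H v)) = 1"
  using measure_cyl_eq_sum[OF assms, of "{}"] shift_prob_measure_UNIV[OF assms(1)] by simp

lemma shift_prob_eqI:
  assumes M: "shift_prob M" and N: "shift_prob N"
    and eq: "\<And>J w. finite J \<Longrightarrow> measure M (cyl J w) = measure N (cyl J w)"
  shows "M = N"
proof (rule measure_eqI_PiM_infinite[where I=UNIV and M="\<lambda>_. count_space UNIV"])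
  show "sets M = sets (PiM UNIV (\<lambda>_. count_space UNIV))" "sets N = sets (PiM UNIV (\<lambda>_. count_space UNIV))"
    using M N by (simp_all add: shift_probD(2) shift_space_def)
  show "finite_measure M"
    using shift_probD(1)[OF M] by (rule prob_space.finite_measure)
  fix J :: "int set" and A assume J: "finite J"
  define E where "E = prod_emb UNIV (\<lambda>_. count_space (UNIV::'a set)) J (Pi\<^sub>E J A)"
  have E: "E = {x. \<forall>j\<in>J. x j \<in> A j}"
    by (auto simp: E_def prod_emb_def space_PiM PiE_def extensional_def Pi_def)
  have E_sets: "E \<in> sets shift_space"
    unfolding E_def shift_space_def using J by (intro sets_PiM_I) auto
  have ind: "indicator E x = (indicator E y :: real)" if "restrict x J = restrict y J" for x y
  proof -
    have "\<forall>j\<in>J. x j = y j"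
      using that by (metis restrict_apply')
    then show ?thesis
      by (simp add: indicator_def E)
  qed
  have "measure M E = (\<Sum>v\<in>words J. indicator E v * measure M (cyl J v))"
    using integral_cylinder_function[where g="indicator E", OF M J ind] E_sets M by (simp add: shift_probD(2))
  also have "\<dots> = (\<Sum>v\<in>words J. indicator E v * measure N (cyl J v))"
    using eq J by simp
  also have "\<dots> = measure N E"
    using integral_cylinder_function[where g="indicator E", OF N J ind] E_sets N by (simp add: shift_probD(2))
  finally show "emeasure M E = emeasure N E"
    using M N by (simp add: shift_probD(1) finite_measure.emeasure_eq_measure prob_space.finite_measure)
qed

lemma measurable_shift_map [measurable]: "shift_map \<in> shift_space \<rightarrow>\<^sub>M shift_space"
  unfolding shift_map_def shift_space_def
  by (rule measurable_PiM_single') (auto simp: space_PiM)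

lemma vimage_shift_map_cyl: "shift_map -` cyl J w = cyl ((\<lambda>i. i + 1) ` J) (\<lambda>i. w (i - 1))"
  by (auto simp: shift_map_def cyl_def)

definition shift_invariant_cyl_family :: "(int set \<Rightarrow> (int \<Rightarrow> 'a) \<Rightarrow> real) \<Rightarrow> bool" where
  "shift_invariant_cyl_family q \<longleftrightarrow>
     (\<forall>J w. finite J \<longrightarrow> q ((\<lambda>i. i + 1) ` J) (\<lambda>i. w (i - 1)) = q J w)"

lemma SIM_iff_cyl:
  "M \<in> SIM \<longleftrightarrow> shift_prob M \<and> shift_invariant_cyl_family (\<lambda>J w. measure M (cyl J w))"
proof (cases "shift_prob M")
  case True
  have shift_M: "shift_map \<in> M \<rightarrow>\<^sub>M shift_space"
    using shift_probD(2)[OF True] by simp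
  have measure_distr_cyl: "measure (distr M shift_space shift_map) (cyl J w)
      = measure M (cyl ((\<lambda>i. i + 1) ` J) (\<lambda>i. w (i - 1)))" if "finite J" for J w
    using measure_distr[OF shift_M sets_cyl[OF that]] by (simp add: shift_probD(3)[OF True] vimage_shift_map_cyl)
  have distr_M: "shift_prob (distr M shift_space shift_map)"
    using prob_space.prob_space_distr[OF shift_probD(1)[OF True] shift_M] by (simp add: shift_prob_def)
  have "distr M shift_space shift_map = M \<longleftrightarrow> (\<forall>J w. finite J \<longrightarrow>
      measure M (cyl ((\<lambda>i. i + 1) ` J) (\<lambda>i. w (i - 1))) = measure M (cyl J w))"
  proof (intro iffI allI impI)
    fix J :: "int set" and w :: "int \<Rightarrow> 'a" assume "distr M shift_space shift_map = M" "finite J"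
    then show "measure M (cyl ((\<lambda>i. i + 1) ` J) (\<lambda>i. w (i - 1))) = measure M (cyl J w)"
      using measure_distr_cyl[of J w] by simp
  next
    assume "\<forall>J w. finite J \<longrightarrow>
      measure M (cyl ((\<lambda>i. i + 1) ` J) (\<lambda>i. w (i - 1))) = measure M (cyl J w)"
    then show "distr M shift_space shift_map = M"
      using measure_distr_cyl by (intro shift_prob_eqI[OF distr_M True]) simp
  qed
  then show ?thesis
    using True by (simp add: SIM_def shift_prob_def shift_invariant_cyl_family_def)
qed (auto simp: SIM_def shift_prob_def)

lemma SIM_shift_prob: "M \<in> SIM \<Longrightarrow> shift_prob M"
  by (simp add: SIM_iff_cyl)

lemma return_const_in_SIM: "return shift_space (\<lambda>_. c) \<in> SIM"
proof -
  have "distr (return shift_space (\<lambda>_. c)) shift_space shift_map = return shift_space (shift_map (\<lambda>_. c))"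
    by (rule distr_return[OF measurable_shift_map]) simp
  also have "shift_map (\<lambda>_. c) = (\<lambda>_. c)"
    by (simp add: shift_map_def)
  finally show ?thesis
    unfolding SIM_def by (auto intro!: prob_space_return)
qed

section \<open>Kolmogorov extension for cylinder probabilities\<close>

definition consistent_cyl_family :: "(int set \<Rightarrow> (int \<Rightarrow> 'a::finite) \<Rightarrow> real) \<Rightarrow> bool" where
  "consistent_cyl_family q \<longleftrightarrow> (\<forall>J w. finite J \<longrightarrow> 0 \<le> q J w) \<and> (\<forall>w. q {} w = 1) \<and>
     (\<forall>J H w. finite H \<longrightarrow> J \<subseteq> H \<longrightarrow> q J w = (\<Sum>v\<in>words H \<inter> cyl J w. q H v))"

lemma consistent_cyl_familyD:
  assumes "consistent_cyl_family q"
  shows "finite J \<Longrightarrow> 0 \<le> q J w" and "q {} w = 1"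
    and "finite H \<Longrightarrow> J \<subseteq> H \<Longrightarrow> q J w = (\<Sum>v\<in>words H \<inter> cyl J w. q H v)"
  using assms unfolding consistent_cyl_family_def by blast+

lemma consistent_cyl_family_measure:
  assumes "shift_prob M"
  shows "consistent_cyl_family (\<lambda>J w. measure M (cyl J w))"
  unfolding consistent_cyl_family_def
proof (intro conjI allI impI)
  show "measure M (cyl {} w) = 1" for w :: "int \<Rightarrow> 'a"
    using shift_prob_measure_UNIV[OF assms] by simp
  show "measure M (cyl J w) = (\<Sum>v\<in>words H \<inter> cyl J w. measure M (cyl H v))"
    if "finite H" "J \<subseteq> H" for J H and w :: "int \<Rightarrow> 'a"
    by (rule measure_cyl_eq_sum[OF assms that])
qed simp

lemma consistent_cyl_family_restrict:
  assumes "consistent_cyl_family q" "finite J"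
  shows "q J (restrict w J) = q J w"
proof -
  have "words J \<inter> cyl J w = {restrict w J}"
    by (auto simp: cyl_def PiE_iff extensional_def fun_eq_iff)
  then have "q J w = (\<Sum>v\<in>{restrict w J}. q J v)"
    using consistent_cyl_familyD(3)[OF assms subset_refl, of w] by (simp only:)
  then show ?thesis
    by simp
qed

lemma consistent_cyl_family_sum_words:
  assumes "consistent_cyl_family q" "finite J"
  shows "(\<Sum>u\<in>words J. q J u) = 1"
proof -
  have "(\<Sum>u\<in>words J. q J u) = (\<Sum>u\<in>words J \<inter> cyl {} undefined. q J u)"
    by simp
  also have "\<dots> = q {} undefined"
    by (rule consistent_cyl_familyD(3)[OF assms, symmetric]) simp
  finally show ?thesis
    using consistent_cyl_familyD(2)[OF assms(1)] by simp
qed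

definition shift_topology :: "(int \<Rightarrow> 'a) topology" where
  "shift_topology = product_topology (\<lambda>_. discrete_topology UNIV) UNIV"

lemma topspace_shift_topology [simp]: "topspace shift_topology = UNIV"
  by (simp add: shift_topology_def)

lemma compact_space_shift_topology: "compact_space (shift_topology :: (int \<Rightarrow> 'a::finite) topology)"
  unfolding shift_topology_def compact_space_product_topology
  by (simp add: compact_space_discrete_topology)

lemma closedin_shift_topology_cyl: "closedin shift_topology (cyl J w)"
proof (cases "J = {}")
  case False
  have "closedin shift_topology {x \<in> topspace shift_topology. x j \<in> {w j}}" for j
    unfolding shift_topology_def
    by (rule closedin_continuous_map_preimage[OF continuous_map_product_projection]) auto
  then have "closedin shift_topology (\<Inter>j\<in>J. {x. x j = w j})"
    using False by (intro closedin_Inter) auto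
  moreover have "cyl J w = (\<Inter>j\<in>J. {x. x j = w j})"
    using False by (auto simp: cyl_def)
  ultimately show ?thesis
    by simp
qed (use closedin_topspace[of shift_topology] in simp)

lemma closedin_shift_topology_restrict:
  fixes X :: "(int \<Rightarrow> 'a::finite) set"
  assumes "finite J"
  shows "closedin shift_topology {x. restrict x J \<in> X}"
proof -
  have "{x. restrict x J \<in> X} = (\<Union>u\<in>X \<inter> words J. cyl J u)"
  proof (intro set_eqI iffI)
    fix x assume "x \<in> {x. restrict x J \<in> X}"
    then show "x \<in> (\<Union>u\<in>X \<inter> words J. cyl J u)"
      using mem_cyl_words_iff_restrict[of x J "restrict x J"] by blast
  next
    fix x assume "x \<in> (\<Union>u\<in>X \<inter> words J. cyl J u)"
    then obtain u where "u \<in> X" "u \<in> words J" "x \<in> cyl J u"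
      by blast
    then show "x \<in> {x. restrict x J \<in> X}"
      using mem_cyl_words_iff_restrict[of x J u] by simp
  qed
  then show ?thesis
    using assms by (auto intro!: closedin_Union closedin_shift_topology_cyl simp: finite_PiE)
qed

text \<open>The continuity condition of the projective limit follows from compactness of
  \<open>A\<^sup>\<int>\<close>.\<close>

lemma decseq_prod_emb_Inter_nonempty:
  fixes X :: "nat \<Rightarrow> (int \<Rightarrow> 'a::finite) set"
  assumes J: "\<And>n. finite (J n)" and X: "\<And>n. X n \<subseteq> words (J n)" "\<And>n. X n \<noteq> {}"
    and dec: "decseq (\<lambda>n. prod_emb UNIV (\<lambda>_. count_space UNIV) (J n) (X n))"
  shows "(\<Inter>n. prod_emb UNIV (\<lambda>_. count_space UNIV) (J n) (X n)) \<noteq> {}"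
proof -
  have emb: "prod_emb UNIV (\<lambda>_. count_space UNIV) (J n) (X n) = {x. restrict x (J n) \<in> X n}" for n
    by (auto simp: prod_emb_def space_PiM)
  have "{x. restrict x (J n) \<in> X n} \<noteq> {}" for n
  proof -
    obtain u where "u \<in> X n"
      using X(2) by blast
    moreover then have "restrict u (J n) = u"
      using X(1)[of n] by (intro extensional_restrict) (auto simp: PiE_iff)
    ultimately show ?thesis
      by (metis (mono_tags, lifting) empty_Collect_eq)
  qed
  then show ?thesis
    unfolding emb using J dec[unfolded emb]
    by (intro compact_space_imp_nest[OF compact_space_shift_topology])
      (auto intro: closedin_shift_topology_restrict)
qed

lemma consistent_cyl_family_sum_preimage:
  assumes q: "consistent_cyl_family q" and H: "finite H" "J \<subseteq> H" and X: "X \<subseteq> words J"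
  shows "(\<Sum>u\<in>X. q J u) = (\<Sum>v\<in>{v\<in>words H. restrict v J \<in> X}. q H v)"
proof -
  have J: "finite J"
    using H finite_subset by blast
  have restrict_eq_iff: "restrict v J = u \<longleftrightarrow> v \<in> cyl J u" if "u \<in> X" for u v
    using that X by (auto simp: cyl_def PiE_iff extensional_def fun_eq_iff)
  have "(\<Sum>u\<in>X. q J u) = (\<Sum>u\<in>X. \<Sum>v\<in>words H \<inter> cyl J u. q H v)"
    using consistent_cyl_familyD(3)[OF q H] by simp
  also have "\<dots> = (\<Sum>u\<in>X. \<Sum>v\<in>{v\<in>{v\<in>words H. restrict v J \<in> X}. restrict v J = u}. q H v)"
    using restrict_eq_iff by (intro sum.cong refl arg_cong[where f="sum _"]) (safe; metis)
  also have "\<dots> = (\<Sum>v\<in>{v\<in>words H. restrict v J \<in> X}. q H v)"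
    using H X J by (intro sum.group) (auto simp: finite_PiE intro: finite_subset)
  finally show ?thesis .
qed

lemma emeasure_point_measure_words:
  fixes q :: "(int \<Rightarrow> 'a::finite) \<Rightarrow> real"
  assumes "finite J" "X \<subseteq> words J" "\<And>u. u \<in> X \<Longrightarrow> 0 \<le> q u"
  shows "emeasure (point_measure (words J) (\<lambda>u. ennreal (q u))) X = ennreal (\<Sum>u\<in>X. q u)"
proof -
  have "finite X"
    using assms(1,2) finite_subset by (metis finite_PiE finite)
  then show ?thesis
    using assms by (simp add: emeasure_point_measure_finite finite_PiE sum_ennreal)
qed

lemma projective_family_consistent_cyl_family:
  fixes q :: "int set \<Rightarrow> (int \<Rightarrow> 'a::finite) \<Rightarrow> real"
  assumes q: "consistent_cyl_family q"
  shows "projective_family UNIV (\<lambda>J. point_measure (words J) (\<lambda>u. ennreal (q J u)))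
    (\<lambda>_. count_space UNIV)"
    (is "projective_family _ ?P ?M")
proof (rule projective_family.intro)
  have PiM: "PiM J ?M = count_space (words J)" if "finite J" for J
    using that by (intro count_space_PiM_finite) auto
  fix J H :: "int set" assume JH: "J \<subseteq> H" "finite H"
  have J: "finite J"
    using JH finite_subset by blast
  show "?P J = distr (?P H) (PiM J ?M) (\<lambda>f. restrict f J)"
  proof (rule measure_eqI)
    show "sets (?P J) = sets (distr (?P H) (PiM J ?M) (\<lambda>f. restrict f J))"
      using J by (simp add: PiM sets_point_measure)
    fix X assume "X \<in> sets (?P J)"
    then have X: "X \<subseteq> words J"
      by (simp add: sets_point_measure)
    have "emeasure (?P J) X = ennreal (\<Sum>u\<in>X. q J u)"
      using consistent_cyl_familyD(1)[OF q J] by (intro emeasure_point_measure_words[OF J X])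
    also have "(\<Sum>u\<in>X. q J u) = (\<Sum>v\<in>{v\<in>words H. restrict v J \<in> X}. q H v)"
      by (rule consistent_cyl_family_sum_preimage[OF q JH(2,1) X])
    also have "ennreal \<dots> = emeasure (?P H) ((\<lambda>f. restrict f J) -` X \<inter> words H)"
      using JH q by (subst emeasure_point_measure_words)
        (auto intro!: arg_cong[where f="\<lambda>S. ennreal (sum _ S)"] consistent_cyl_familyD(1)[OF q JH(2)])
    also have "\<dots> = emeasure (distr (?P H) (PiM J ?M) (\<lambda>f. restrict f J)) X"
      using X J JH by (subst emeasure_distr) (auto simp: PiM space_point_measure sets_point_measure)
    finally show "emeasure (?P J) X = emeasure (distr (?P H) (PiM J ?M) (\<lambda>f. restrict f J)) X" .
  qed
next
  fix J :: "int set" assume J: "finite J"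
  show "prob_space (?P J)"
    using emeasure_point_measure_words[OF J order_refl, of "q J"]
      consistent_cyl_familyD(1)[OF q J] consistent_cyl_family_sum_words[OF q J]
    by (intro prob_spaceI) (simp add: space_point_measure)
qed

lemma consistent_cyl_family_imp_shift_prob:
  fixes q :: "int set \<Rightarrow> (int \<Rightarrow> 'a::finite) \<Rightarrow> real"
  assumes q: "consistent_cyl_family q"
  obtains M where "shift_prob M" "\<And>J w. finite J \<Longrightarrow> measure M (cyl J w) = q J w"
proof -
  define P where "P J = point_measure (words J) (\<lambda>u. ennreal (q J u))" for J
  interpret PF: projective_family UNIV P "\<lambda>_. count_space (UNIV :: 'a set)"
    unfolding P_def by (rule projective_family_consistent_cyl_family[OF q])
  have PiM: "PiM J (\<lambda>_. count_space (UNIV :: 'a set)) = count_space (words J)" if "finite J" for J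
    using that by (intro count_space_PiM_finite) auto
  have cont: "(\<Inter>i. PF.emb UNIV (J i) (X i)) \<noteq> {}"
    if J: "\<And>i. finite (J i)" and X: "\<And>i. X i \<in> sets (PiM (J i) (\<lambda>_. count_space (UNIV :: 'a set)))"
      and "decseq (\<lambda>i. PF.emb UNIV (J i) (X i))" and pos: "0 < (INF i. P (J i) (X i))"
    for J :: "nat \<Rightarrow> int set" and X
  proof (rule decseq_prod_emb_Inter_nonempty)
    show "X i \<subseteq> words (J i)" for i
      using sets.sets_into_space[OF X] J by (simp add: PiM)
    show "X i \<noteq> {}" for i
      using pos INF_lower[of i UNIV "\<lambda>i. P (J i) (X i)"] by auto
  qed (use that in auto)
  have emeasure_lim_cyl: "emeasure PF.lim (cyl J w) = q J w" if J: "finite J" for J w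
  proof -
    have "cyl J w = PF.emb UNIV J {restrict w J}"
      by (auto simp: prod_emb_def space_PiM cyl_def fun_eq_iff) metis
    then have "emeasure PF.lim (cyl J w) = emeasure (P J) {restrict w J}"
      using J cont by (simp only:) (rule PF.emeasure_lim, auto simp: PiM)
    also have "\<dots> = q J w"
      using J consistent_cyl_familyD(1)[OF q J] consistent_cyl_family_restrict[OF q J]
      by (simp add: P_def emeasure_point_measure_words)
    finally show ?thesis .
  qed
  have sets_lim: "sets PF.lim = sets shift_space"
    using PF.sets_lim by (simp add: shift_space_def)
  then have "space PF.lim = UNIV"
    using sets_eq_imp_space_eq by fastforce
  then have "prob_space PF.lim"
    using emeasure_lim_cyl[of "{}" undefined] consistent_cyl_familyD(2)[OF q] by (intro prob_spaceI) simp
  then show thesis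
    using that[of PF.lim] sets_lim emeasure_lim_cyl consistent_cyl_familyD(1)[OF q]
    by (simp add: shift_prob_def measure_def)
qed

lemma consistent_cyl_family_imp_SIM:
  fixes q :: "int set \<Rightarrow> (int \<Rightarrow> 'a::finite) \<Rightarrow> real"
  assumes "consistent_cyl_family q" "shift_invariant_cyl_family q"
  obtains M where "M \<in> SIM" "\<And>J w. finite J \<Longrightarrow> measure M (cyl J w) = q J w"
proof -
  obtain M where M: "shift_prob M" "\<And>J w. finite J \<Longrightarrow> measure M (cyl J w) = q J w"
    using consistent_cyl_family_imp_shift_prob[OF assms(1)] by blast
  then have "M \<in> SIM"
    using assms(2) by (simp add: SIM_iff_cyl shift_invariant_cyl_family_def)
  then show thesis
    using that M(2) by blast
qed

section \<open>The metric \<open>d\<^sub>\<M>\<close>\<close>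

definition window :: "nat \<Rightarrow> int set" where
  "window n = {-int n..int n}"

definition window_dist :: "nat \<Rightarrow> (int \<Rightarrow> 'a::finite) measure \<Rightarrow> (int \<Rightarrow> 'a) measure \<Rightarrow> real" where
  "window_dist n \<mu> \<nu> =
     (\<Sum>u\<in>words (window n). \<bar>measure \<mu> (cyl (window n) u) - measure \<nu> (cyl (window n) u)\<bar>)"

lemma finite_window [simp]: "finite (window n)"
  by (simp add: window_def)

lemma finite_subset_window:
  assumes "finite J"
  obtains n where "J \<subseteq> window n"
proof
  have "nat \<bar>j\<bar> \<le> Max (insert 0 ((\<lambda>j. nat \<bar>j\<bar>) ` J))" if "j \<in> J" for j
    using assms that by (intro Max_ge) auto
  then show "J \<subseteq> window (Max (insert 0 ((\<lambda>j. nat \<bar>j\<bar>) ` J)))"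
    by (force simp: window_def)
qed

lemma dM_eq_suminf: "dM \<mu> \<nu> = (\<Sum>n. (1/2)^n * (1/2) * window_dist n \<mu> \<nu>)"
  by (simp add: dM_def window_dist_def window_def)

lemma window_dist_nonneg: "0 \<le> window_dist n \<mu> \<nu>"
  by (simp add: window_dist_def sum_nonneg)

lemma window_dist_commute: "window_dist n \<mu> \<nu> = window_dist n \<nu> \<mu>"
  by (simp add: window_dist_def abs_minus_commute)

lemma window_dist_triangle: "window_dist n \<mu> \<rho> \<le> window_dist n \<mu> \<nu> + window_dist n \<nu> \<rho>"
  unfolding window_dist_def sum.distrib[symmetric] by (intro sum_mono) linarith

lemma window_dist_le_2:
  assumes "shift_prob \<mu>" "shift_prob \<nu>"
  shows "window_dist n \<mu> \<nu> \<le> 2"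
proof -
  have "window_dist n \<mu> \<nu>
      \<le> (\<Sum>u\<in>words (window n). measure \<mu> (cyl (window n) u) + measure \<nu> (cyl (window n) u))"
    unfolding window_dist_def by (intro sum_mono) (auto simp: abs_le_iff)
  also have "\<dots> = 2"
    using assms by (simp add: sum.distrib sum_measure_cyl_words)
  finally show ?thesis .
qed

lemma dM_summand_le:
  assumes "shift_prob \<mu>" "shift_prob \<nu>"
  shows "norm ((1/2::real)^n * (1/2) * window_dist n \<mu> \<nu>) \<le> (1/2)^n"
  using window_dist_le_2[OF assms, of n] window_dist_nonneg[of n \<mu> \<nu>] by (simp add: abs_mult)

lemma summable_dM:
  assumes "shift_prob \<mu>" "shift_prob \<nu>"
  shows "summable (\<lambda>n. (1/2::real)^n * (1/2) * window_dist n \<mu> \<nu>)"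
  by (rule summable_comparison_test[OF _ summable_geometric[of "1/2::real"]])
    (use dM_summand_le[OF assms] in auto)

lemma dM_nonneg:
  assumes "shift_prob \<mu>" "shift_prob \<nu>"
  shows "0 \<le> dM \<mu> \<nu>"
  unfolding dM_eq_suminf by (rule suminf_nonneg[OF summable_dM[OF assms]]) (simp add: window_dist_nonneg)

lemma dM_le_2:
  assumes "shift_prob \<mu>" "shift_prob \<nu>"
  shows "dM \<mu> \<nu> \<le> 2"
proof -
  have "dM \<mu> \<nu> \<le> (\<Sum>n. (1/2::real)^n)"
    unfolding dM_eq_suminf using window_dist_le_2[OF assms]
    by (intro suminf_le summable_dM[OF assms] summable_geometric) auto
  also have "\<dots> = 2"
    using suminf_geometric[of "1/2::real"] by simp
  finally show ?thesis .
qed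

lemma dM_self [simp]: "dM \<mu> \<mu> = 0"
  by (simp add: dM_def)

lemma dM_commute: "dM \<mu> \<nu> = dM \<nu> \<mu>"
  by (simp add: dM_eq_suminf window_dist_commute)

lemma dM_triangle:
  assumes "shift_prob \<mu>" "shift_prob \<nu>" "shift_prob \<rho>"
  shows "dM \<mu> \<rho> \<le> dM \<mu> \<nu> + dM \<nu> \<rho>"
proof -
  have "dM \<mu> \<rho> \<le> (\<Sum>n. (1/2::real)^n * (1/2) * window_dist n \<mu> \<nu> + (1/2)^n * (1/2) * window_dist n \<nu> \<rho>)"
    unfolding dM_eq_suminf
  proof (intro suminf_le summable_dM summable_add assms)
    show "(1/2::real)^n * (1/2) * window_dist n \<mu> \<rho>
        \<le> (1/2)^n * (1/2) * window_dist n \<mu> \<nu> + (1/2)^n * (1/2) * window_dist n \<nu> \<rho>" for n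
      using mult_left_mono[OF window_dist_triangle[of n \<mu> \<rho> \<nu>], of "(1/2)^n * (1/2)"]
      by (simp add: algebra_simps)
  qed
  also have "\<dots> = dM \<mu> \<nu> + dM \<nu> \<rho>"
    unfolding dM_eq_suminf by (intro suminf_add[symmetric] summable_dM assms)
  finally show ?thesis .
qed

lemma window_dist_le_dM:
  assumes "shift_prob \<mu>" "shift_prob \<nu>"
  shows "window_dist n \<mu> \<nu> \<le> 2 * 2^n * dM \<mu> \<nu>"
proof -
  have "(1/2::real)^n * (1/2) * window_dist n \<mu> \<nu> \<le> dM \<mu> \<nu>"
    unfolding dM_eq_suminf using sum_le_suminf[OF summable_dM[OF assms], of "{n}"]
    by (simp add: window_dist_nonneg)
  then show ?thesis
    by (simp add: field_simps)
qed

lemma measure_cyl_tendsto_if_dM_tendsto_0: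
  assumes \<mu>: "\<And>k. shift_prob (\<mu> k)" and m: "shift_prob m" and lim: "(\<lambda>k. dM (\<mu> k) m) \<longlonglongrightarrow> 0"
    and J: "finite J"
  shows "(\<lambda>k. measure (\<mu> k) (cyl J w)) \<longlonglongrightarrow> measure m (cyl J w)"
proof -
  have window_lim: "(\<lambda>k. measure (\<mu> k) (cyl (window n) v)) \<longlonglongrightarrow> measure m (cyl (window n) v)"
    if v: "v \<in> words (window n)" for n v
  proof -
    have "norm (measure (\<mu> k) (cyl (window n) v) - measure m (cyl (window n) v))
        \<le> window_dist n (\<mu> k) m" for k
      unfolding window_dist_def real_norm_def using v by (intro member_le_sum) (auto simp: finite_PiE)
    then have bound: "norm (measure (\<mu> k) (cyl (window n) v) - measure m (cyl (window n) v))
        \<le> 2 * 2^n * dM (\<mu> k) m" for k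
      using window_dist_le_dM[OF \<mu> m, of n k] by (rule order_trans)
    have "(\<lambda>k. measure (\<mu> k) (cyl (window n) v) - measure m (cyl (window n) v)) \<longlonglongrightarrow> 0"
      by (rule Lim_null_comparison[OF always_eventually tendsto_mult_right_zero[OF lim]]) (use bound in blast)
    then show ?thesis
      by (simp add: LIM_zero_iff)
  qed
  obtain n where n: "J \<subseteq> window n"
    using finite_subset_window[OF J] .
  have "(\<lambda>k. \<Sum>v\<in>words (window n) \<inter> cyl J w. measure (\<mu> k) (cyl (window n) v))
      \<longlonglongrightarrow> (\<Sum>v\<in>words (window n) \<inter> cyl J w. measure m (cyl (window n) v))"
    by (intro tendsto_sum window_lim) auto
  then show ?thesis
    by (simp only: measure_cyl_eq_sum[OF \<mu> finite_window n] measure_cyl_eq_sum[OF m finite_window n])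
qed

lemma dM_tendsto_0_if_measure_cyl_tendsto:
  assumes \<mu>: "\<And>k. shift_prob (\<mu> k)" and m: "shift_prob m"
    and lim: "\<And>J w. finite J \<Longrightarrow> (\<lambda>k. measure (\<mu> k) (cyl J w)) \<longlonglongrightarrow> measure m (cyl J w)"
  shows "(\<lambda>k. dM (\<mu> k) m) \<longlonglongrightarrow> 0"
proof -
  have "(\<lambda>k. window_dist n (\<mu> k) m)
      \<longlonglongrightarrow> (\<Sum>u\<in>words (window n). \<bar>measure m (cyl (window n) u) - measure m (cyl (window n) u)\<bar>)" for n
    unfolding window_dist_def using lim by (intro tendsto_sum tendsto_rabs tendsto_diff tendsto_const) auto
  then have terms: "(\<lambda>k. (1/2::real)^n * (1/2) * window_dist n (\<mu> k) m) \<longlonglongrightarrow> (1/2)^n * (1/2) * 0" for n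
    by (intro tendsto_mult tendsto_const) simp
  have "(\<lambda>k. \<Sum>n. (1/2::real)^n * (1/2) * window_dist n (\<mu> k) m) \<longlonglongrightarrow> (\<Sum>n. (1/2::real)^n * (1/2) * 0)"
  proof (rule tannerys_theorem[where M="\<lambda>n. (1/2::real)^n", THEN conjunct2, THEN conjunct2])
    show "\<forall>\<^sub>F (n, k) in at_top \<times>\<^sub>F sequentially. norm ((1/2::real)^n * (1/2) * window_dist n (\<mu> k) m) \<le> (1/2)^n"
      using dM_summand_le[OF \<mu> m] by (intro always_eventually) auto
  qed (use terms in auto)
  then show ?thesis
    unfolding dM_eq_suminf by simp
qed

lemma integral_cylinder_function_tendsto:
  fixes g :: "(int \<Rightarrow> 'a::finite) \<Rightarrow> real"
  assumes \<mu>: "\<And>k. shift_prob (\<mu> k)" and m: "shift_prob m" and lim: "(\<lambda>k. dM (\<mu> k) m) \<longlonglongrightarrow> 0"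
    and H: "finite H" and g: "\<And>x y. restrict x H = restrict y H \<Longrightarrow> g x = g y"
  shows "(\<lambda>k. integral\<^sup>L (\<mu> k) g) \<longlonglongrightarrow> integral\<^sup>L m g"
proof -
  have "(\<lambda>k. measure (\<mu> k) (cyl H v)) \<longlonglongrightarrow> measure m (cyl H v)" for v
    by (rule measure_cyl_tendsto_if_dM_tendsto_0[OF \<mu> m lim H])
  then have "(\<lambda>k. \<Sum>v\<in>words H. g v * measure (\<mu> k) (cyl H v)) \<longlonglongrightarrow> (\<Sum>v\<in>words H. g v * measure m (cyl H v))"
    by (intro tendsto_sum tendsto_mult tendsto_const)
  then show ?thesis
    by (simp only: integral_cylinder_function[where g=g, OF \<mu> H g] integral_cylinder_function[where g=g, OF m H g])
qed

section \<open>Sequential compactness of the shift-invariant measures\<close>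

lemma consistent_cyl_family_limit:
  assumes q: "\<And>k. consistent_cyl_family (q k)"
    and lim: "\<And>J w. finite J \<Longrightarrow> (\<lambda>k. q k J w) \<longlonglongrightarrow> p J w"
  shows "consistent_cyl_family p"
  unfolding consistent_cyl_family_def
proof (intro conjI allI impI)
  show "0 \<le> p J w" if "finite J" for J w
    using consistent_cyl_familyD(1)[OF q that] by (intro LIMSEQ_le_const[OF lim[OF that]]) auto
  show "p {} w = 1" for w
    using lim[of "{}" w] consistent_cyl_familyD(2)[OF q] by (simp add: LIMSEQ_const_iff)
  show "p J w = (\<Sum>v\<in>words H \<inter> cyl J w. p H v)" if H: "finite H" "J \<subseteq> H" for J H w
  proof (rule LIMSEQ_unique)
    show "(\<lambda>k. q k J w) \<longlonglongrightarrow> p J w"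
      using H by (intro lim) (rule finite_subset)
    show "(\<lambda>k. q k J w) \<longlonglongrightarrow> (\<Sum>v\<in>words H \<inter> cyl J w. p H v)"
      unfolding consistent_cyl_familyD(3)[OF q H] by (intro tendsto_sum lim H(1))
  qed
qed

lemma shift_invariant_cyl_family_limit:
  assumes "\<And>k. shift_invariant_cyl_family (q k)"
    and lim: "\<And>J w. finite J \<Longrightarrow> (\<lambda>k. q k J w) \<longlonglongrightarrow> p J w"
  shows "shift_invariant_cyl_family p"
  unfolding shift_invariant_cyl_family_def
proof (intro allI impI)
  fix J :: "int set" and w :: "int \<Rightarrow> 'a" assume J: "finite J"
  have "(\<lambda>k. q k J w) \<longlonglongrightarrow> p ((\<lambda>i. i + 1) ` J) (\<lambda>i. w (i - 1))"
    using assms(1) lim[of "(\<lambda>i. i + 1) ` J" "\<lambda>i. w (i - 1)"] J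
    by (simp add: shift_invariant_cyl_family_def)
  then show "p ((\<lambda>i. i + 1) ` J) (\<lambda>i. w (i - 1)) = p J w"
    using lim[OF J] by (rule LIMSEQ_unique)
qed

lemma bounded_seqs_common_convergent_subseq:
  fixes f :: "nat \<Rightarrow> nat \<Rightarrow> real"
  assumes bounded: "\<And>k j. \<bar>f k j\<bar> \<le> B"
  obtains r where "strict_mono r" "\<And>j. convergent (\<lambda>k. f (r k) j)"
proof -
  interpret subseqs "\<lambda>j s. convergent (\<lambda>k. f (s k) j)"
  proof
    fix j and s :: "nat \<Rightarrow> nat"
    have "bounded (range (\<lambda>k. f (s k) j))"
      using bounded by (intro boundedI[where B=B]) auto
    then obtain l r where "strict_mono r" "((\<lambda>k. f (s k) j) \<circ> r) \<longlonglongrightarrow> l"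
      using bounded_imp_convergent_subsequence by blast
    then show "\<exists>r. strict_mono r \<and> convergent (\<lambda>k. f ((s \<circ> r) k) j)"
      by (auto simp: o_def convergent_def)
  qed
  have "convergent (\<lambda>k. f (diagseq k) j)" for j
  proof -
    have "convergent (\<lambda>k. f ((diagseq \<circ> (+) (Suc j)) k) j)"
      by (rule diagseq_holds) (auto dest: convergent_subseq_convergent simp: o_def)
    then obtain l where "(\<lambda>k. f (diagseq (k + Suc j)) j) \<longlonglongrightarrow> l"
      by (auto simp: convergent_def add.commute)
    then have "(\<lambda>k. f (diagseq k) j) \<longlonglongrightarrow> l"
      by (rule LIMSEQ_offset)
    then show ?thesis
      by (rule convergentI)
  qed
  then show thesis
    using that subseq_diagseq by blast
qed

lemma cyl_probs_convergent_subseq: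
  fixes \<mu> :: "nat \<Rightarrow> (int \<Rightarrow> 'a::finite) measure"
  assumes \<mu>: "\<And>k. shift_prob (\<mu> k)"
  obtains r where "strict_mono r" "\<And>J w. finite J \<Longrightarrow> convergent (\<lambda>k. measure (\<mu> (r k)) (cyl J w))"
proof -
  define C :: "(int set \<times> (int \<Rightarrow> 'a)) set" where "C = (SIGMA J:{J. finite J}. words J)"
  have "countable C"
    unfolding C_def by (intro countable_SIGMA countable_Collect_finite countable_finite) (auto simp: finite_PiE)
  moreover have "({}, \<lambda>_. undefined) \<in> C"
    by (simp add: C_def)
  ultimately have C: "range (from_nat_into C) = C"
    by (intro range_from_nat_into) auto
  define val where "val k j = measure (\<mu> k) (cyl (fst (from_nat_into C j)) (snd (from_nat_into C j)))" for k j
  have "\<bar>val k j\<bar> \<le> 1" for k j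
    by (simp add: val_def shift_prob_measure_le_1[OF \<mu>])
  then obtain r where r: "strict_mono r" "\<And>j. convergent (\<lambda>k. val (r k) j)"
    using bounded_seqs_common_convergent_subseq by blast
  show thesis
  proof (rule that[OF r(1)])
    fix J :: "int set" and w :: "int \<Rightarrow> 'a" assume "finite J"
    then have "(J, restrict w J) \<in> range (from_nat_into C)"
      using C by (auto simp: C_def)
    then obtain j where j: "(J, restrict w J) = from_nat_into C j"
      by (rule rangeE)
    show "convergent (\<lambda>k. measure (\<mu> (r k)) (cyl J w))"
      using r(2)[of j] by (simp add: val_def flip: j)
  qed
qed

lemma seq_compact_SIM:
  fixes \<mu> :: "nat \<Rightarrow> (int \<Rightarrow> 'a::finite) measure"
  assumes \<mu>: "\<And>k. \<mu> k \<in> SIM"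
  obtains r m where "strict_mono r" "m \<in> SIM" "(\<lambda>k. dM (\<mu> (r k)) m) \<longlonglongrightarrow> 0"
proof -
  have \<mu>_prob: "shift_prob (\<mu> k)" for k
    using \<mu> by (rule SIM_shift_prob)
  obtain r where r: "strict_mono r" "\<And>J w. finite J \<Longrightarrow> convergent (\<lambda>k. measure (\<mu> (r k)) (cyl J w))"
    using cyl_probs_convergent_subseq[of \<mu>, OF \<mu>_prob] by blast
  define q where "q J w = lim (\<lambda>k. measure (\<mu> (r k)) (cyl J w))" for J w
  have q: "(\<lambda>k. measure (\<mu> (r k)) (cyl J w)) \<longlonglongrightarrow> q J w" if "finite J" for J w
    using r(2)[OF that] by (simp add: q_def convergent_LIMSEQ_iff)
  have "consistent_cyl_family q"
    by (rule consistent_cyl_family_limit[OF consistent_cyl_family_measure[OF \<mu>_prob] q])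
  moreover have "shift_invariant_cyl_family q"
  proof (rule shift_invariant_cyl_family_limit[OF _ q])
    show "shift_invariant_cyl_family (\<lambda>J w. measure (\<mu> (r k)) (cyl J w))" for k
      using \<mu>[of "r k"] by (simp add: SIM_iff_cyl)
  qed
  ultimately obtain m where m: "m \<in> SIM" "\<And>J w. finite J \<Longrightarrow> measure m (cyl J w) = q J w"
    using consistent_cyl_family_imp_SIM by blast
  have "(\<lambda>k. dM (\<mu> (r k)) m) \<longlonglongrightarrow> 0"
    using q m(2) by (intro dM_tendsto_0_if_measure_cyl_tendsto[OF \<mu>_prob SIM_shift_prob[OF m(1)]]) simp
  then show thesis
    using that r(1) m(1) by blast
qed

section \<open>Probabilistic cellular automata\<close>

definition stochastic_rule :: "int set \<Rightarrow> ((int \<Rightarrow> 'a::finite) \<Rightarrow> 'a \<Rightarrow> real) \<Rightarrow> bool" where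
  "stochastic_rule N fe \<longleftrightarrow> finite N \<and>
     (\<forall>u\<in>extensional N. (\<forall>b. 0 \<le> fe u b) \<and> (\<Sum>b\<in>UNIV. fe u b) = 1)"

definition pca_trans ::
  "int set \<Rightarrow> ((int \<Rightarrow> 'a) \<Rightarrow> 'a \<Rightarrow> real) \<Rightarrow> int set \<Rightarrow> (int \<Rightarrow> 'a) \<Rightarrow> (int \<Rightarrow> 'a) \<Rightarrow> real" where
  "pca_trans N fe U w x = (\<Prod>i\<in>U. fe (pat x i N) (w i))"

lemma stochastic_rule_nonneg: "stochastic_rule N fe \<Longrightarrow> 0 \<le> fe (pat x i N) b"
  by (simp add: stochastic_rule_def pat_def)

lemma stochastic_rule_sum: "stochastic_rule N fe \<Longrightarrow> (\<Sum>b\<in>UNIV. fe (pat x i N) b) = 1"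
  by (simp add: stochastic_rule_def pat_def)

lemma pca_trans_nonneg: "stochastic_rule N fe \<Longrightarrow> 0 \<le> pca_trans N fe U w x"
  unfolding pca_trans_def by (intro prod_nonneg) (auto intro: stochastic_rule_nonneg)

lemma pca_trans_empty [simp]: "pca_trans N fe {} w = (\<lambda>_. 1)"
  by (simp add: pca_trans_def fun_eq_iff)

lemma pca_trans_local:
  assumes "finite N" "finite U"
  obtains H where "finite H"
    "\<And>x y. restrict x H = restrict y H \<Longrightarrow> pca_trans N fe U w x = pca_trans N fe U w y"
proof -
  define H where "H = (\<Union>i\<in>U. (+) i ` N)"
  have "pca_trans N fe U w x = pca_trans N fe U w y" if eq: "restrict x H = restrict y H" for x y
  proof -
    have "x (i + j) = y (i + j)" if "i \<in> U" "j \<in> N" for i j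
    proof -
      have "i + j \<in> H"
        using that by (auto simp: H_def)
      then show ?thesis
        using fun_cong[OF eq, of "i + j"] by simp
    qed
    then have "pat x i N = pat y i N" if "i \<in> U" for i
      using that by (auto simp: pat_def fun_eq_iff)
    then show ?thesis
      by (simp add: pca_trans_def)
  qed
  moreover have "finite H"
    using assms by (simp add: H_def)
  ultimately show thesis
    using that by blast
qed

lemma pca_trans_sum_words:
  assumes fe: "stochastic_rule N fe" and H: "finite H" "J \<subseteq> H"
  shows "(\<Sum>v\<in>words H \<inter> cyl J w. pca_trans N fe H v x) = pca_trans N fe J w x"
proof -
  define B where "B i = (if i \<in> J then {w i} else UNIV)" for i
  have "words H \<inter> cyl J w = PiE H B"
    using H(2) by (auto simp: B_def cyl_def PiE_def Pi_def split: if_splits)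
  then have "(\<Sum>v\<in>words H \<inter> cyl J w. pca_trans N fe H v x) = (\<Prod>i\<in>H. \<Sum>b\<in>B i. fe (pat x i N) b)"
    unfolding pca_trans_def using H(1) by (simp only:) (intro prod_sum_PiE[symmetric], auto simp: B_def)
  also have "\<dots> = (\<Prod>i\<in>H. if i \<in> J then fe (pat x i N) (w i) else 1)"
    using stochastic_rule_sum[OF fe] by (intro prod.cong) (auto simp: B_def)
  also have "\<dots> = pca_trans N fe J w x"
    using H by (simp add: prod.If_cases Int_absorb1 pca_trans_def)
  finally show ?thesis .
qed

lemma pca_trans_shift:
  fixes fe :: "(int \<Rightarrow> 'a) \<Rightarrow> 'a \<Rightarrow> real"
  shows "pca_trans N fe ((\<lambda>i. i + 1) ` U) (\<lambda>i. w (i - 1)) = pca_trans N fe U w \<circ> shift_map"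
proof
  fix x :: "int \<Rightarrow> 'a"
  have pat_shift: "pat x (i + 1) N = pat (shift_map x) i N" for i
    by (auto simp: pat_def shift_map_def fun_eq_iff ac_simps)
  have "pca_trans N fe ((\<lambda>i. i + 1) ` U) (\<lambda>i. w (i - 1)) x = (\<Prod>i\<in>U. fe (pat x (i + 1) N) (w i))"
    by (simp add: pca_trans_def prod.reindex inj_on_def)
  then show "pca_trans N fe ((\<lambda>i. i + 1) ` U) (\<lambda>i. w (i - 1)) x = (pca_trans N fe U w \<circ> shift_map) x"
    by (simp only: pat_shift) (simp add: pca_trans_def)
qed

lemma integrable_pca_trans:
  assumes "stochastic_rule N fe" "shift_prob M" "finite U"
  shows "integrable M (pca_trans N fe U w)"
proof -
  have "finite N"
    using assms(1) by (simp add: stochastic_rule_def)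
  then obtain H where H: "finite H"
    and local: "\<And>x y. restrict x H = restrict y H \<Longrightarrow> pca_trans N fe U w x = pca_trans N fe U w y"
    using pca_trans_local[OF _ assms(3)] by blast
  show ?thesis
    by (rule integrable_cylinder_function[where g="pca_trans N fe U w", OF assms(2) H local])
qed

lemma pca_image_exists:
  assumes fe: "stochastic_rule N fe" and \<nu>: "\<nu> \<in> SIM"
  obtains \<nu>' where "\<nu>' \<in> SIM" "\<And>J w. finite J \<Longrightarrow> measure \<nu>' (cyl J w) = integral\<^sup>L \<nu> (pca_trans N fe J w)"
proof (rule consistent_cyl_family_imp_SIM)
  have \<nu>_prob: "shift_prob \<nu>"
    using \<nu> by (rule SIM_shift_prob)
  interpret prob_space \<nu>
    using shift_probD(1)[OF \<nu>_prob] .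
  show "consistent_cyl_family (\<lambda>J w. integral\<^sup>L \<nu> (pca_trans N fe J w))"
    unfolding consistent_cyl_family_def
  proof (intro conjI allI impI)
    show "0 \<le> integral\<^sup>L \<nu> (pca_trans N fe J w)" for J w
      by (intro integral_nonneg_AE AE_I2 pca_trans_nonneg fe)
    show "integral\<^sup>L \<nu> (pca_trans N fe {} w) = 1" for w
      by (simp add: prob_space)
    show "integral\<^sup>L \<nu> (pca_trans N fe J w) = (\<Sum>v\<in>words H \<inter> cyl J w. integral\<^sup>L \<nu> (pca_trans N fe H v))"
      if H: "finite H" "J \<subseteq> H" for J H w
    proof -
      have "pca_trans N fe J w = (\<lambda>x. \<Sum>v\<in>words H \<inter> cyl J w. pca_trans N fe H v x)"
        using pca_trans_sum_words[OF fe H] by (simp add: fun_eq_iff)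
      then show ?thesis
        using integrable_pca_trans[OF fe \<nu>_prob H(1)] by (simp only: Bochner_Integration.integral_sum)
    qed
  qed
  show "shift_invariant_cyl_family (\<lambda>J w. integral\<^sup>L \<nu> (pca_trans N fe J w))"
    unfolding shift_invariant_cyl_family_def
  proof (intro allI impI)
    fix J :: "int set" and w :: "int \<Rightarrow> 'a" assume J: "finite J"
    have "pca_trans N fe J w \<in> borel_measurable shift_space"
      using borel_measurable_integrable[OF integrable_pca_trans[OF fe \<nu>_prob J]]
      by (simp only: measurable_cong_sets[OF shift_probD(2)[OF \<nu>_prob] refl])
    moreover have "distr \<nu> shift_space shift_map = \<nu>"
      using \<nu> by (simp add: SIM_def)
    ultimately have "integral\<^sup>L \<nu> (\<lambda>x. pca_trans N fe J w (shift_map x)) = integral\<^sup>L \<nu> (pca_trans N fe J w)"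
      using integral_distr[of shift_map \<nu> shift_space "pca_trans N fe J w"] shift_probD(2)[OF \<nu>_prob] by simp
    then show "integral\<^sup>L \<nu> (pca_trans N fe ((\<lambda>i. i + 1) ` J) (\<lambda>i. w (i - 1))) = integral\<^sup>L \<nu> (pca_trans N fe J w)"
      by (simp add: pca_trans_shift o_def)
  qed
qed (rule that)

lemma SIM_mean_exists:
  assumes \<nu>: "\<And>k. \<nu> k \<in> SIM"
  obtains M where "M \<in> SIM"
    "\<And>J w. finite J \<Longrightarrow> measure M (cyl J w) = (\<Sum>k\<le>n. measure (\<nu> k) (cyl J w)) / Suc n"
proof (rule consistent_cyl_family_imp_SIM)
  have \<nu>_prob: "shift_prob (\<nu> k)" for k
    using \<nu> by (rule SIM_shift_prob)
  show "consistent_cyl_family (\<lambda>J w. (\<Sum>k\<le>n. measure (\<nu> k) (cyl J w)) / Suc n)"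
    unfolding consistent_cyl_family_def
  proof (intro conjI allI impI)
    show "0 \<le> (\<Sum>k\<le>n. measure (\<nu> k) (cyl J w)) / Suc n" for J w
      by (simp add: sum_nonneg)
    show "(\<Sum>k\<le>n. measure (\<nu> k) (cyl {} w)) / Suc n = 1" for w
      using shift_prob_measure_UNIV[OF \<nu>_prob] by simp
    show "(\<Sum>k\<le>n. measure (\<nu> k) (cyl J w)) / Suc n
        = (\<Sum>v\<in>words H \<inter> cyl J w. (\<Sum>k\<le>n. measure (\<nu> k) (cyl H v)) / Suc n)"
      if H: "finite H" "J \<subseteq> H" for J H w
    proof -
      have "(\<Sum>k\<le>n. measure (\<nu> k) (cyl J w)) = (\<Sum>k\<le>n. \<Sum>v\<in>words H \<inter> cyl J w. measure (\<nu> k) (cyl H v))"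
        by (intro sum.cong refl measure_cyl_eq_sum[OF \<nu>_prob H])
      then show ?thesis
        by (simp add: sum.swap[of _ "{..n}"] sum_divide_distrib)
    qed
  qed
  show "shift_invariant_cyl_family (\<lambda>J w. (\<Sum>k\<le>n. measure (\<nu> k) (cyl J w)) / Suc n)"
    using \<nu> by (simp add: SIM_iff_cyl shift_invariant_cyl_family_def)
qed (rule that)

lemma integral_cylinder_function_mean:
  fixes g :: "(int \<Rightarrow> 'a::finite) \<Rightarrow> real"
  assumes M: "shift_prob M" and \<nu>: "\<And>k. shift_prob (\<nu> k)"
    and mean: "\<And>J w. finite J \<Longrightarrow> measure M (cyl J w) = (\<Sum>k\<le>n. measure (\<nu> k) (cyl J w)) / Suc n"
    and H: "finite H" and g: "\<And>x y. restrict x H = restrict y H \<Longrightarrow> g x = g y"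
  shows "integral\<^sup>L M g = (\<Sum>k\<le>n. integral\<^sup>L (\<nu> k) g) / Suc n"
proof -
  have "integral\<^sup>L M g = (\<Sum>v\<in>words H. g v * ((\<Sum>k\<le>n. measure (\<nu> k) (cyl H v)) / Suc n))"
    using integral_cylinder_function[where g=g, OF M H g] mean[OF H] by simp
  also have "\<dots> = (\<Sum>k\<le>n. \<Sum>v\<in>words H. g v * measure (\<nu> k) (cyl H v)) / Suc n"
    by (simp add: sum_divide_distrib sum_distrib_left sum.swap[of _ "words H"])
  also have "\<dots> = (\<Sum>k\<le>n. integral\<^sup>L (\<nu> k) g) / Suc n"
    using integral_cylinder_function[where g=g, OF \<nu> H g] by simp
  finally show ?thesis .
qed

lemma pca_orbit_exists:
  assumes fe: "stochastic_rule N fe"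
  obtains \<nu> where "\<And>k. \<nu> k \<in> SIM"
    "\<And>k J w. finite J \<Longrightarrow> measure (\<nu> (Suc k)) (cyl J w) = integral\<^sup>L (\<nu> k) (pca_trans N fe J w)"
proof -
  have "\<forall>\<nu>\<in>SIM. \<exists>\<nu>'. \<nu>' \<in> SIM \<and>
      (\<forall>J w. finite J \<longrightarrow> measure \<nu>' (cyl J w) = integral\<^sup>L \<nu> (pca_trans N fe J w))"
    using pca_image_exists[OF fe] by metis
  then obtain F where F: "\<And>\<nu>. \<nu> \<in> SIM \<Longrightarrow> F \<nu> \<in> SIM"
    "\<And>\<nu> J w. \<nu> \<in> SIM \<Longrightarrow> finite J \<Longrightarrow> measure (F \<nu>) (cyl J w) = integral\<^sup>L \<nu> (pca_trans N fe J w)"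
    by metis
  define \<nu> where "\<nu> k = (F ^^ k) (return shift_space (\<lambda>_. undefined))" for k
  have \<nu>_SIM: "\<nu> k \<in> SIM" for k
    by (induction k) (simp_all add: \<nu>_def return_const_in_SIM F(1))
  moreover have "measure (\<nu> (Suc k)) (cyl J w) = integral\<^sup>L (\<nu> k) (pca_trans N fe J w)" if "finite J" for k J w
    using F(2)[OF \<nu>_SIM that] by (simp add: \<nu>_def)
  ultimately show thesis
    using that by blast
qed

text \<open>Krylov--Bogolyubov: the Cesaro means of an orbit are almost invariant (the defect
  telescopes), and any limit point of them is invariant.\<close>

lemma pca_mean_almost_fixed:
  assumes fe: "stochastic_rule N fe" and \<nu>: "\<And>k. shift_prob (\<nu> k)"
    and orbit: "\<And>k J w. finite J \<Longrightarrow> measure (\<nu> (Suc k)) (cyl J w) = integral\<^sup>L (\<nu> k) (pca_trans N fe J w)"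
    and M: "shift_prob M"
    and mean: "\<And>J w. finite J \<Longrightarrow> measure M (cyl J w) = (\<Sum>k\<le>n. measure (\<nu> k) (cyl J w)) / Suc n"
    and U: "finite U"
  shows "\<bar>measure M (cyl U w) - integral\<^sup>L M (pca_trans N fe U w)\<bar> \<le> 1 / Suc n"
proof -
  have "finite N"
    using fe by (simp add: stochastic_rule_def)
  then obtain H where H: "finite H"
    and local: "\<And>x y. restrict x H = restrict y H \<Longrightarrow> pca_trans N fe U w x = pca_trans N fe U w y"
    using pca_trans_local[OF _ U] by blast
  have "integral\<^sup>L M (pca_trans N fe U w) = (\<Sum>k\<le>n. measure (\<nu> (Suc k)) (cyl U w)) / Suc n"
    using integral_cylinder_function_mean[OF M \<nu> mean H local] orbit[OF U] by simp
  then have "measure M (cyl U w) - integral\<^sup>L M (pca_trans N fe U w)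
      = (\<Sum>k\<le>n. measure (\<nu> k) (cyl U w) - measure (\<nu> (Suc k)) (cyl U w)) / Suc n"
    by (simp add: mean[OF U] sum_subtractf diff_divide_distrib)
  also have "\<dots> = (measure (\<nu> 0) (cyl U w) - measure (\<nu> (Suc n)) (cyl U w)) / Suc n"
    using sum_telescope[of "\<lambda>k. measure (\<nu> k) (cyl U w)" n] by simp
  moreover have "\<bar>measure (\<nu> 0) (cyl U w) - measure (\<nu> (Suc n)) (cyl U w)\<bar> \<le> 1"
    using shift_prob_measure_le_1[OF \<nu>, of 0 "cyl U w"] shift_prob_measure_le_1[OF \<nu>, of "Suc n" "cyl U w"]
      measure_nonneg[of "\<nu> 0" "cyl U w"] measure_nonneg[of "\<nu> (Suc n)" "cyl U w"]
    unfolding abs_le_iff by linarith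
  ultimately show ?thesis
    by (simp add: abs_divide divide_right_mono)
qed

lemma pca_fixed_if_limit_of_almost_fixed:
  assumes fe: "stochastic_rule N fe" and a: "\<And>k. shift_prob (a k)" and \<mu>: "shift_prob \<mu>"
    and lim: "(\<lambda>k. dM (a k) \<mu>) \<longlonglongrightarrow> 0"
    and almost: "\<And>k. \<bar>measure (a k) (cyl U w) - integral\<^sup>L (a k) (pca_trans N fe U w)\<bar> \<le> \<epsilon> k"
    and \<epsilon>: "\<epsilon> \<longlonglongrightarrow> 0" and U: "finite U"
  shows "measure \<mu> (cyl U w) = integral\<^sup>L \<mu> (pca_trans N fe U w)"
proof -
  have "finite N"
    using fe by (simp add: stochastic_rule_def)
  then obtain H where H: "finite H"
    and local: "\<And>x y. restrict x H = restrict y H \<Longrightarrow> pca_trans N fe U w x = pca_trans N fe U w y"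
    using pca_trans_local[OF _ U] by blast
  have "(\<lambda>k. measure (a k) (cyl U w) - integral\<^sup>L (a k) (pca_trans N fe U w)) \<longlonglongrightarrow> 0"
    using almost by (intro Lim_null_comparison[OF always_eventually \<epsilon>]) simp
  moreover have "(\<lambda>k. measure (a k) (cyl U w) - integral\<^sup>L (a k) (pca_trans N fe U w))
      \<longlonglongrightarrow> measure \<mu> (cyl U w) - integral\<^sup>L \<mu> (pca_trans N fe U w)"
    by (intro tendsto_diff measure_cyl_tendsto_if_dM_tendsto_0[OF a \<mu> lim U]
        integral_cylinder_function_tendsto[OF a \<mu> lim H local])
  ultimately show ?thesis
    using LIMSEQ_unique by fastforce
qed

lemma pca_fixed_point_exists:
  assumes fe: "stochastic_rule N fe"
  obtains \<mu> where "\<mu> \<in> SIM"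
    "\<And>U w. finite U \<Longrightarrow> measure \<mu> (cyl U w) = integral\<^sup>L \<mu> (pca_trans N fe U w)"
proof -
  obtain \<nu> where \<nu>: "\<And>k. \<nu> k \<in> SIM" and orbit:
    "\<And>k J w. finite J \<Longrightarrow> measure (\<nu> (Suc k)) (cyl J w) = integral\<^sup>L (\<nu> k) (pca_trans N fe J w)"
    using pca_orbit_exists[OF fe] by blast
  have "\<forall>n. \<exists>M. M \<in> SIM \<and>
      (\<forall>J w. finite J \<longrightarrow> measure M (cyl J w) = (\<Sum>k\<le>n. measure (\<nu> k) (cyl J w)) / Suc n)"
    using SIM_mean_exists[of \<nu>, OF \<nu>] by metis
  then obtain a where a: "\<And>n. a n \<in> SIM" and mean:
    "\<And>n J w. finite J \<Longrightarrow> measure (a n) (cyl J w) = (\<Sum>k\<le>n. measure (\<nu> k) (cyl J w)) / Suc n"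
    by metis
  obtain r \<mu> where r: "strict_mono r" and \<mu>: "\<mu> \<in> SIM" and lim: "(\<lambda>k. dM (a (r k)) \<mu>) \<longlonglongrightarrow> 0"
    using seq_compact_SIM[of a, OF a] by blast
  have \<epsilon>: "(\<lambda>k. 1 / Suc (r k)) \<longlonglongrightarrow> 0"
    using LIMSEQ_subseq_LIMSEQ[OF LIMSEQ_Suc[OF lim_const_over_n[of 1]] r] by (simp add: o_def)
  have "measure \<mu> (cyl U w) = integral\<^sup>L \<mu> (pca_trans N fe U w)" if U: "finite U" for U w
  proof (rule pca_fixed_if_limit_of_almost_fixed[where a="\<lambda>k. a (r k)", OF fe _ _ lim _ \<epsilon> U])
    show "\<bar>measure (a (r k)) (cyl U w) - integral\<^sup>L (a (r k)) (pca_trans N fe U w)\<bar> \<le> 1 / Suc (r k)" for k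
      using SIM_shift_prob \<nu> a by (intro pca_mean_almost_fixed[where \<nu>=\<nu>, OF fe _ orbit _ mean U]) blast+
  qed (use SIM_shift_prob a \<mu> in blast)+
  then show thesis
    using that \<mu> by blast
qed

section \<open>Stationary measures of perturbations\<close>

lemma perturbation_stochastic_rule:
  "perturbation N f feps \<Longrightarrow> 0 < eps \<Longrightarrow> stochastic_rule N (feps eps)"
  unfolding perturbation_def stochastic_rule_def by blast

lemma Meps_eq: "Meps N feps eps =
    {\<mu>\<in>SIM. \<forall>U w. finite U \<longrightarrow> measure \<mu> (cyl U w) = integral\<^sup>L \<mu> (pca_trans N (feps eps) U w)}"
  by (simp add: Meps_def pca_trans_def[abs_def])

lemma Meps_subset_SIM: "Meps N feps eps \<subseteq> SIM"
  by (auto simp: Meps_def)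

lemma Meps_nonempty:
  assumes "perturbation N f feps" "0 < eps"
  shows "Meps N feps eps \<noteq> {}"
proof -
  obtain \<mu> where "\<mu> \<in> SIM"
    "\<And>U w. finite U \<Longrightarrow> measure \<mu> (cyl U w) = integral\<^sup>L \<mu> (pca_trans N (feps eps) U w)"
    using pca_fixed_point_exists[OF perturbation_stochastic_rule[OF assms]] by blast
  then show ?thesis
    by (auto simp: Meps_eq)
qed

lemma MlimI:
  assumes "\<mu> \<in> SIM" "\<And>n. 0 < e n" "e \<longlonglongrightarrow> 0" "\<And>n. m n \<in> Meps N feps (e n)"
    "(\<lambda>n. dM (m n) \<mu>) \<longlonglongrightarrow> 0"
  shows "\<mu> \<in> Mlim N feps"
  unfolding Mlim_def using assms by blast

lemma Meps_seq_subseq_tendsto_Mlim: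
  assumes e: "\<And>n. 0 < e n" "e \<longlonglongrightarrow> 0" and \<mu>: "\<And>n. \<mu> n \<in> Meps N feps (e n)"
  obtains r m where "strict_mono r" "m \<in> Mlim N feps" "(\<lambda>n. dM (\<mu> (r n)) m) \<longlonglongrightarrow> 0"
proof -
  obtain r m where r: "strict_mono r" "m \<in> SIM" "(\<lambda>n. dM (\<mu> (r n)) m) \<longlonglongrightarrow> 0"
    using seq_compact_SIM[of \<mu>] \<mu> Meps_subset_SIM by blast
  have "(\<lambda>n. e (r n)) \<longlonglongrightarrow> 0"
    using LIMSEQ_subseq_LIMSEQ[OF e(2) r(1)] by (simp add: o_def)
  then have "m \<in> Mlim N feps"
    using r e(1) \<mu> by (intro MlimI[of m "\<lambda>n. e (r n)" "\<lambda>n. \<mu> (r n)"]) auto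
  then show thesis
    using that r by blast
qed

lemma Mlim_nonempty:
  assumes "perturbation N f feps"
  shows "Mlim N feps \<noteq> {}"
proof -
  have "Meps N feps (1 / Suc n) \<noteq> {}" for n
    by (rule Meps_nonempty[OF assms]) simp
  then have "\<forall>n. \<exists>\<mu>. \<mu> \<in> Meps N feps (1 / Suc n)"
    by blast
  then obtain \<mu> where \<mu>: "\<And>n. \<mu> n \<in> Meps N feps (1 / Suc n)"
    by metis
  obtain r m where "m \<in> Mlim N feps"
    by (rule Meps_seq_subseq_tendsto_Mlim[of "\<lambda>n. 1 / Suc n", OF _ LIMSEQ_Suc[OF lim_const_over_n] \<mu>]) simp
  then show ?thesis
    by blast
qed

lemma acc_pts_subset_Mlim:
  assumes "\<And>eps. 0 < eps \<Longrightarrow> \<pi> eps \<in> Meps N feps eps"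
  shows "acc_pts \<pi> \<subseteq> Mlim N feps"
proof
  fix \<mu> assume "\<mu> \<in> acc_pts \<pi>"
  then obtain e where "\<mu> \<in> SIM" "\<And>n. 0 < e n" "e \<longlonglongrightarrow> 0" "(\<lambda>n. dM (\<pi> (e n)) \<mu>) \<longlonglongrightarrow> 0"
    by (auto simp: acc_pts_def)
  then show "\<mu> \<in> Mlim N feps"
    using assms by (intro MlimI[of \<mu> e "\<lambda>n. \<pi> (e n)"]) simp_all
qed

section \<open>Diameters\<close>

lemma bdd_above_dM:
  assumes "K \<subseteq> SIM"
  shows "bdd_above {dM \<mu> \<nu> | \<mu> \<nu>. \<mu> \<in> K \<and> \<nu> \<in> K}"
  using assms dM_le_2 SIM_shift_prob unfolding bdd_above_def by blast

lemma dM_le_diamM: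
  assumes "K \<subseteq> SIM" "\<mu> \<in> K" "\<nu> \<in> K"
  shows "dM \<mu> \<nu> \<le> diamM K"
  unfolding diamM_def using assms by (intro cSup_upper bdd_above_dM) blast+

lemma diamM_nonneg:
  assumes "K \<subseteq> SIM" "K \<noteq> {}"
  shows "0 \<le> diamM K"
  using assms dM_le_diamM[OF assms(1)] dM_self by fastforce

lemma diamM_singleton [simp]: "diamM {\<mu>} = 0"
  by (simp add: diamM_def)

lemma diamM_le:
  assumes K: "K \<subseteq> SIM" "K \<noteq> {}" and m: "m \<in> SIM" and c: "\<And>\<mu>. \<mu> \<in> K \<Longrightarrow> dM \<mu> m \<le> c"
  shows "diamM K \<le> 2 * c"
  unfolding diamM_def
proof (rule cSup_least)
  show "{dM \<mu> \<nu> | \<mu> \<nu>. \<mu> \<in> K \<and> \<nu> \<in> K} \<noteq> {}"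
    using K(2) by blast
  have "dM \<mu> \<nu> \<le> 2 * c" if "\<mu> \<in> K" "\<nu> \<in> K" for \<mu> \<nu>
    using dM_triangle[of \<mu> m \<nu>] dM_commute[of m \<nu>] c[OF that(1)] c[OF that(2)] that K(1) m
    by (auto simp: SIM_shift_prob subset_iff)
  then show "x \<le> 2 * c" if "x \<in> {dM \<mu> \<nu> | \<mu> \<nu>. \<mu> \<in> K \<and> \<nu> \<in> K}" for x
    using that by blast
qed

lemma less_diamM_imp_far_point:
  assumes K: "K \<subseteq> SIM" "K \<noteq> {}" and m: "m \<in> SIM" and less: "\<delta> < diamM K"
  obtains \<mu> where "\<mu> \<in> K" "\<delta> / 2 < dM \<mu> m"
  using diamM_le[OF K m, of "\<delta> / 2"] less by force

lemma diamM_Meps_tendsto_0_if_singletons: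
  assumes "\<And>eps. 0 < eps \<Longrightarrow> \<exists>\<mu>. Meps N feps eps = {\<mu>}"
  shows "((\<lambda>eps. diamM (Meps N feps eps)) \<longlongrightarrow> 0) (at_right 0)"
proof (rule tendsto_eventually)
  show "\<forall>\<^sub>F eps in at_right 0. diamM (Meps N feps eps) = 0"
    using eventually_at_right_less[of 0] by eventually_elim (use assms in force)
qed

lemma Mlim_singleton_imp_Meps_close:
  assumes Mlim: "Mlim N feps = {\<mu>\<^sub>0}" and \<delta>: "0 < \<delta>"
  shows "\<forall>\<^sub>F eps in at_right 0. \<forall>\<mu>\<in>Meps N feps eps. dM \<mu> \<mu>\<^sub>0 < \<delta>"
proof (rule ccontr)
  assume "\<not> ?thesis"
  then have "\<forall>b>0. \<exists>eps>0. eps < b \<and> (\<exists>\<mu>\<in>Meps N feps eps. \<delta> \<le> dM \<mu> \<mu>\<^sub>0)"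
    unfolding eventually_at_right_field by (auto simp: not_less) (meson not_le)
  then have "\<forall>n. \<exists>eps \<mu>. 0 < eps \<and> eps < 1 / Suc n \<and> \<mu> \<in> Meps N feps eps \<and> \<delta> \<le> dM \<mu> \<mu>\<^sub>0"
    by (metis of_nat_0_less_iff zero_less_Suc zero_less_divide_1_iff)
  then obtain e \<mu> where e: "\<And>n. 0 < e n" "\<And>n. e n < 1 / Suc n"
    and \<mu>: "\<And>n. \<mu> n \<in> Meps N feps (e n)" "\<And>n. \<delta> \<le> dM (\<mu> n) \<mu>\<^sub>0"
    by metis
  have "e \<longlonglongrightarrow> 0"
    by (rule tendsto_sandwich[OF always_eventually always_eventually tendsto_const
          LIMSEQ_Suc[OF lim_const_over_n[of 1]]])
      (use e in \<open>auto intro: less_imp_le\<close>)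
  then obtain r m where "m \<in> Mlim N feps" "(\<lambda>n. dM (\<mu> (r n)) m) \<longlonglongrightarrow> 0"
    using Meps_seq_subseq_tendsto_Mlim[where e=e and \<mu>=\<mu>, OF e(1) _ \<mu>(1)] by blast
  then have "(\<lambda>n. dM (\<mu> (r n)) \<mu>\<^sub>0) \<longlonglongrightarrow> 0"
    using Mlim by simp
  then have "\<forall>\<^sub>F n in sequentially. dM (\<mu> (r n)) \<mu>\<^sub>0 < \<delta>"
    using \<delta> by (rule order_tendstoD(2))
  then obtain n where "dM (\<mu> (r n)) \<mu>\<^sub>0 < \<delta>"
    by (auto simp: eventually_sequentially)
  then show False
    using \<mu>(2)[of "r n"] by simp
qed

lemma diamM_Meps_tendsto_0_if_Mlim_singleton:
  assumes pert: "perturbation N f feps" and Mlim: "Mlim N feps = {\<mu>\<^sub>0}"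
  shows "((\<lambda>eps. diamM (Meps N feps eps)) \<longlongrightarrow> 0) (at_right 0)"
proof (rule tendstoI)
  fix \<delta> :: real assume "0 < \<delta>"
  then have "0 < \<delta> / 3"
    by simp
  have \<mu>\<^sub>0: "\<mu>\<^sub>0 \<in> SIM"
    using Mlim by (auto simp: Mlim_def)
  show "\<forall>\<^sub>F eps in at_right 0. dist (diamM (Meps N feps eps)) 0 < \<delta>"
    using Mlim_singleton_imp_Meps_close[OF Mlim \<open>0 < \<delta> / 3\<close>] eventually_at_right_less[of 0]
  proof eventually_elim
    case (elim eps)
    have nonempty: "Meps N feps eps \<noteq> {}"
      using Meps_nonempty[OF pert] elim(2) by simp
    have "0 \<le> diamM (Meps N feps eps)"
      by (rule diamM_nonneg[OF Meps_subset_SIM nonempty])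
    moreover have "diamM (Meps N feps eps) \<le> 2 * (\<delta> / 3)"
      using elim(1) by (intro diamM_le[OF Meps_subset_SIM nonempty \<mu>\<^sub>0]) (simp add: less_imp_le)
    ultimately show ?case
      using \<open>0 < \<delta>\<close> by simp
  qed
qed

lemma uniformly_approached_if_diamM_tendsto_0:
  assumes diam: "((\<lambda>eps. diamM (Meps N feps eps)) \<longlongrightarrow> 0) (at_right 0)"
  shows "uniformly_approached N feps"
  unfolding uniformly_approached_def
proof (intro allI impI equalityI)
  fix \<pi> assume \<pi>: "\<forall>eps>0. \<pi> eps \<in> Meps N feps eps"
  then show "acc_pts \<pi> \<subseteq> Mlim N feps"
    by (intro acc_pts_subset_Mlim) simp
  show "Mlim N feps \<subseteq> acc_pts \<pi>"
  proof
    fix \<mu> assume "\<mu> \<in> Mlim N feps"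
    then obtain e m where \<mu>: "\<mu> \<in> SIM" and e: "\<And>n. 0 < e n" "e \<longlonglongrightarrow> 0"
      and m: "\<And>n. m n \<in> Meps N feps (e n)" "(\<lambda>n. dM (m n) \<mu>) \<longlonglongrightarrow> 0"
      by (auto simp: Mlim_def)
    have "filterlim e (at_right 0) sequentially"
      using e by (intro tendsto_imp_filterlim_at_right) (auto intro: always_eventually)
    then have diam_e: "(\<lambda>n. diamM (Meps N feps (e n))) \<longlonglongrightarrow> 0"
      by (rule filterlim_compose[OF diam])
    have in_Meps: "\<pi> (e n) \<in> Meps N feps (e n)" "m n \<in> Meps N feps (e n)" for n
      using \<pi> e(1) m(1) by simp_all
    have prob: "shift_prob (\<pi> (e n))" "shift_prob (m n)" "shift_prob \<mu>" for n
      using in_Meps[of n] Meps_subset_SIM[of N feps "e n"] \<mu> by (auto intro: SIM_shift_prob)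
    have upper: "dM (\<pi> (e n)) \<mu> \<le> diamM (Meps N feps (e n)) + dM (m n) \<mu>" for n
      using dM_triangle[OF prob(1)[of n] prob(2)[of n] prob(3)]
        dM_le_diamM[OF Meps_subset_SIM in_Meps[of n]] by linarith
    have "(\<lambda>n. dM (\<pi> (e n)) \<mu>) \<longlonglongrightarrow> 0"
    proof (rule tendsto_sandwich[OF always_eventually always_eventually tendsto_const])
      show "\<forall>n. 0 \<le> dM (\<pi> (e n)) \<mu>"
        using dM_nonneg[OF prob(1,3)] by blast
      show "\<forall>n. dM (\<pi> (e n)) \<mu> \<le> diamM (Meps N feps (e n)) + dM (m n) \<mu>"
        using upper by blast
      show "(\<lambda>n. diamM (Meps N feps (e n)) + dM (m n) \<mu>) \<longlonglongrightarrow> 0"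
        using tendsto_add[OF diam_e m(2)] by simp
    qed
    then show "\<mu> \<in> acc_pts \<pi>"
      using \<mu> e by (auto simp: acc_pts_def)
  qed
qed

lemma Meps_far_selection:
  assumes pert: "perturbation N f feps" and m: "m \<in> SIM"
    and large: "\<And>eps. 0 < eps \<Longrightarrow> eps < t \<Longrightarrow> \<delta> < diamM (Meps N feps eps)"
  obtains \<pi> where "\<And>eps. 0 < eps \<Longrightarrow> \<pi> eps \<in> Meps N feps eps"
    "\<And>eps. 0 < eps \<Longrightarrow> eps < t \<Longrightarrow> \<delta> / 2 < dM (\<pi> eps) m"
proof -
  have "\<exists>\<mu>\<in>Meps N feps eps. eps < t \<longrightarrow> \<delta> / 2 < dM \<mu> m" if "0 < eps" for eps
    using less_diamM_imp_far_point[OF Meps_subset_SIM Meps_nonempty[OF pert that] m large[OF that]]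
      Meps_nonempty[OF pert that] by blast
  then show thesis
    using that by metis
qed

lemma Liminf_diamM_Meps_eq_0_if_uniformly_approached:
  assumes pert: "perturbation N f feps" and unif: "uniformly_approached N feps"
  shows "Liminf (at_right 0) (\<lambda>eps. ereal (diamM (Meps N feps eps))) = 0"
proof (rule antisym)
  show "0 \<le> Liminf (at_right 0) (\<lambda>eps. ereal (diamM (Meps N feps eps)))"
  proof (intro Liminf_bounded)
    show "\<forall>\<^sub>F eps in at_right 0. 0 \<le> ereal (diamM (Meps N feps eps))"
      using eventually_at_right_less[of 0]
      by eventually_elim (simp add: diamM_nonneg[OF Meps_subset_SIM Meps_nonempty[OF pert]])
  qed
  show "Liminf (at_right 0) (\<lambda>eps. ereal (diamM (Meps N feps eps))) \<le> 0"
  proof (rule ccontr)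
    assume "\<not> ?thesis"
    then obtain \<delta> where \<delta>: "0 < \<delta>" "ereal \<delta> < Liminf (at_right 0) (\<lambda>eps. ereal (diamM (Meps N feps eps)))"
      using ereal_dense2 not_le by (metis ereal_less(2) less_ereal.simps(1))
    then have "\<forall>\<^sub>F eps in at_right 0. \<delta> < diamM (Meps N feps eps)"
      using le_Liminf_iff[THEN iffD1, OF order_refl] by fastforce
    then obtain t where t: "0 < t" "\<And>eps. 0 < eps \<Longrightarrow> eps < t \<Longrightarrow> \<delta> < diamM (Meps N feps eps)"
      unfolding eventually_at_right_field by auto
    obtain m where m: "m \<in> Mlim N feps"
      using Mlim_nonempty[OF pert] by blast
    then obtain \<pi> where \<pi>: "\<And>eps. 0 < eps \<Longrightarrow> \<pi> eps \<in> Meps N feps eps"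
      "\<And>eps. 0 < eps \<Longrightarrow> eps < t \<Longrightarrow> \<delta> / 2 < dM (\<pi> eps) m"
      using Meps_far_selection[OF pert _ t(2)] by (auto simp: Mlim_def)
    have "m \<in> acc_pts \<pi>"
      using unif m \<pi>(1) by (simp add: uniformly_approached_def)
    then obtain e where e: "\<And>n. 0 < e n" "e \<longlonglongrightarrow> 0" "(\<lambda>n. dM (\<pi> (e n)) m) \<longlonglongrightarrow> 0"
      by (auto simp: acc_pts_def)
    have "\<forall>\<^sub>F n in sequentially. e n < t \<and> dM (\<pi> (e n)) m < \<delta> / 2"
      using order_tendstoD(2)[OF e(2) t(1)] order_tendstoD(2)[OF e(3), of "\<delta> / 2"] \<delta>(1)
      by (simp add: eventually_conj)
    then obtain n where "e n < t" "dM (\<pi> (e n)) m < \<delta> / 2"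
      by (auto simp: eventually_sequentially)
    then show False
      using \<pi>(2)[OF e(1)] by force
  qed
qed

theorem mainTheorem10:
  fixes N :: "int set" and f :: "(int \<Rightarrow> 'a::finite) \<Rightarrow> 'a"
    and feps :: "real \<Rightarrow> (int \<Rightarrow> 'a) \<Rightarrow> 'a \<Rightarrow> real"
  assumes "perturbation N f feps"
  shows "((\<forall>eps>0. \<exists>\<mu>. Meps N feps eps = {\<mu>}) \<longrightarrow>
            ((\<lambda>eps. diamM (Meps N feps eps)) \<longlongrightarrow> 0) (at_right 0))
       \<and> ((\<exists>\<mu>. Mlim N feps = {\<mu>}) \<longrightarrow>
            ((\<lambda>eps. diamM (Meps N feps eps)) \<longlongrightarrow> 0) (at_right 0))
       \<and> (((\<lambda>eps. diamM (Meps N feps eps)) \<longlongrightarrow> 0) (at_right 0) \<longrightarrow>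
            uniformly_approached N feps)
       \<and> (uniformly_approached N feps \<longrightarrow>
            Liminf (at_right 0) (\<lambda>eps. ereal (diamM (Meps N feps eps))) = 0)"
  using diamM_Meps_tendsto_0_if_singletons diamM_Meps_tendsto_0_if_Mlim_singleton[OF assms]
    uniformly_approached_if_diamM_tendsto_0 Liminf_diamM_Meps_eq_0_if_uniformly_approached[OF assms]
  by blast

end
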